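(* Let $V$ be a real-analytic function on $\mathbb{T}^d$ extending analytically to $\mathbb{T}^d_\rho$, $0<\rho\le1$. Let $x_0\ne x_1$ be critical points of $V$, with $x_0$ non-degenerate. Then $$\|x_0-x_1\|\ge c_\rho\|\mathfrak{H}(x_0)^{-1}\|^{-1}(1+\|V\|_\infty)^{-1},$$ where $\mathfrak{H}$ is the Hessian of $V$ and $c_\rho>0$ depends only on $\rho$ (and $d$).
   Context: $\mathbb{T}=\mathbb{R}/\mathbb{Z}$; $\mathbb{T}^d_\rho=\{x+iy:x\in\mathbb{T}^d,y\in\mathbb{R}^d,|y|<\rho\}$; $\|V\|_\infty=\sup\{|V(z)|:z\in\mathbb{T}^d_{3\rho/4}\}$; $\|\cdot\|$ is the Euclidean norm on the torus. *)

theory Defs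
  imports "HOL-Analysis.Analysis"
begin

definition cvec :: "real^'n \<Rightarrow> complex^'n" where
  "cvec x = (\<chi> i. complex_of_real (x $ i))"

text \<open>The complex strip T^d_rho, lifted to C^d: all imaginary parts of modulus < rho.\<close>
definition strip :: "real \<Rightarrow> (complex^'n) set" where
  "strip r = {z. \<forall>i. \<bar>Im (z $ i)\<bar> < r}"

definition holo_on :: "(complex^'n \<Rightarrow> complex) \<Rightarrow> (complex^'n) set \<Rightarrow> bool" where
  "holo_on F S \<longleftrightarrow> (\<forall>z\<in>S. \<exists>L. (F has_derivative L) (at z) \<and>
       (\<forall>h. L (\<chi> j. \<i> * h $ j) = \<i> * L h))"

definition supnorm :: "(complex^'n \<Rightarrow> complex) \<Rightarrow> real \<Rightarrow> real" where
  "supnorm F r = (SUP z\<in>strip (3 * r / 4). cmod (F z))"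

definition periodic1 :: "(real^'n \<Rightarrow> real) \<Rightarrow> bool" where
  "periodic1 f \<longleftrightarrow> (\<forall>x k. (\<forall>i. k $ i \<in> \<int>) \<longrightarrow> f (x + k) = f x)"

definition torus_dist :: "real^'n \<Rightarrow> real^'n \<Rightarrow> real" where
  "torus_dist x y = Inf {norm (x - y - k) | k. \<forall>i. k $ i \<in> \<int>}"

definition partial :: "(real^'n \<Rightarrow> real) \<Rightarrow> 'n \<Rightarrow> real^'n \<Rightarrow> real" where
  "partial f i x = deriv (\<lambda>t. f (x + t *\<^sub>R axis i 1)) 0"

definition hessian :: "(real^'n \<Rightarrow> real) \<Rightarrow> real^'n \<Rightarrow> real^'n^'n" where
  "hessian f x = (\<chi> i j. partial (partial f j) i x)"

definition critical_point :: "(real^'n \<Rightarrow> real) \<Rightarrow> real^'n \<Rightarrow> bool" where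
  "critical_point f x \<longleftrightarrow> (f has_derivative (\<lambda>h. 0)) (at x)"

end

theory Submission
  imports Defs "HOL-Complex_Analysis.Complex_Analysis"
begin

(* Let \<delta> be a lift of x1 - x0 to R^d and u = \<delta> / |\<delta>|. For each i, the function
   \<psi>(s) = \<partial>_i V(x0 + s u), continued holomorphically through F, is holomorphic on a disc of
   radius \<rho>/4, bounded there by 4 \<parallel>V\<parallel> / \<rho> by Cauchy's estimate, and vanishes at s = 0 and
   s = |\<delta>| since x0 and x1 are critical. A bounded holomorphic function with two zeros has
   derivative of order |\<delta>| at the first one, and \<psi>'(0) = (H u)_i by the symmetry of mixed
   derivatives. Hence 1 = |u| \<le> \<parallel>H\<inverse>\<parallel> |H u| \<le> C \<parallel>H\<inverse>\<parallel> \<parallel>V\<parallel> |\<delta>|.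
   Mixed derivatives commute because for a jointly continuous, separately holomorphic function
   of two variables the mixed derivative is a double Cauchy integral, symmetric by Fubini. *)

section \<open>Cauchy integrals over a circle\<close>

lemma Cauchy_integral_formula_circlepath_0:
  assumes "continuous_on (cball 0 R) f" "f holomorphic_on ball 0 R" "w \<in> ball 0 R"
  shows "f w = contour_integral (circlepath 0 R) (\<lambda>u. f u / (2 * of_real pi * \<i> * (u - w)))"
proof -
  have "((\<lambda>u. f u / (u - w) / (2 * of_real pi * \<i>)) has_contour_integral f w) (circlepath 0 R)"
    using has_contour_integral_div[OF Cauchy_integral_circlepath[OF assms(1,2)], of w "2 * of_real pi * \<i>"]
      assms(3) by simp
  then show ?thesis
    by (simp add: contour_integral_unique mult.commute)
qed

lemma deriv_0_eq_circlepath_integral: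
  assumes "continuous_on (cball 0 R) f" "f holomorphic_on ball 0 R" "0 < R"
  shows "deriv f 0 = contour_integral (circlepath 0 R) (\<lambda>u. f u / (2 * of_real pi * \<i> * u^2))"
proof -
  note Cauchy_derivative_integral_circlepath[OF assms(1,2), of 0]
  then have "deriv f 0 = contour_integral (circlepath 0 R) (\<lambda>u. f u / u^2) / (2 * of_real pi * \<i>)"
    using assms(3) by (simp add: DERIV_imp_deriv)
  also have "\<dots> = contour_integral (circlepath 0 R) (\<lambda>u. f u / (2 * of_real pi * \<i> * u^2))"
    using Cauchy_derivative_integral_circlepath(1)[OF assms(1,2), of 0] assms(3)
    by (simp add: contour_integral_div[symmetric] mult.commute)
  finally show ?thesis .
qed

lemma continuous_on_circlepath_integral_param:
  fixes H :: "'a::topological_space \<Rightarrow> complex \<Rightarrow> complex"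
  assumes "0 \<le> R" and "continuous_on (S \<times> sphere 0 R) (\<lambda>(s, u). H s u)"
  shows "continuous_on S (\<lambda>s. contour_integral (circlepath 0 R) (H s))"
proof -
  let ?\<gamma> = "circlepath (0::complex) R"
  have "?\<gamma> x \<in> sphere 0 R" if "x \<in> cbox 0 1" for x
    using that assms(1) path_image_circlepath_nonneg[of R 0] by (auto simp: path_image_def cbox_interval)
  then have "continuous_on (S \<times> cbox 0 1) (\<lambda>p. (\<lambda>(s, u). H s u) (fst p, ?\<gamma> (snd p)))"
    by (intro continuous_on_compose2[OF assms(2)]) (auto simp: circlepath intro!: continuous_intros)
  then have "continuous_on (S \<times> cbox 0 1) (\<lambda>(s, x). H s (?\<gamma> x) * vector_derivative ?\<gamma> (at x))"
    by (auto simp: vector_derivative_circlepath split_beta intro!: continuous_intros)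
  then show ?thesis
    unfolding contour_integral_integral cbox_interval[symmetric]
    by (rule integral_continuous_on_param)
qed

lemma holomorphic_on_ball_if_Cauchy_integral:
  assumes "0 \<le> R" and "continuous_on (sphere 0 R) f"
    and "\<And>w. w \<in> ball 0 R \<Longrightarrow>
           f w = contour_integral (circlepath 0 R) (\<lambda>u. f u / (2 * of_real pi * \<i> * (u - w)))"
  shows "f holomorphic_on ball 0 R"
proof -
  define g where "g w = contour_integral (circlepath 0 R) (\<lambda>u. f u / (u - w))" for w
  have g: "g holomorphic_on ball 0 R"
    unfolding holomorphic_on_open[OF open_ball]
  proof
    fix w :: complex assume w: "w \<in> ball 0 R"
    have "((\<lambda>u. f u / (u - v) ^ 1) has_contour_integral g v) (circlepath 0 R)" if "v \<in> ball 0 R" for v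
    proof -
      have "continuous_on (sphere 0 R) (\<lambda>u. f u / (u - v))"
        using that assms(2) by (intro continuous_intros) auto
      then show ?thesis using assms(1)
        by (simp add: g_def has_contour_integral_integral contour_integrable_continuous_circlepath)
    qed
    from Cauchy_next_derivative_circlepath(2)[OF _ this _ w] assms(1,2)
    show "\<exists>f'. (g has_field_derivative f') (at w)" by auto
  qed
  have fg: "g w / (2 * of_real pi * \<i>) = f w" if "w \<in> ball 0 R" for w
  proof -
    have "continuous_on (sphere 0 R) (\<lambda>u. f u / (u - w))"
      using that assms(2) by (intro continuous_intros) auto
    then have "contour_integral (circlepath 0 R) (\<lambda>u. f u / (u - w) / (2 * of_real pi * \<i>)) =
               g w / (2 * of_real pi * \<i>)"
      unfolding g_def using assms(1)
      by (intro contour_integral_div contour_integrable_continuous_circlepath) simp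
    moreover have "(\<lambda>u. f u / (2 * of_real pi * \<i> * (u - w))) = (\<lambda>u. f u / (u - w) / (2 * of_real pi * \<i>))"
      by (simp add: fun_eq_iff mult.commute)
    ultimately show ?thesis using assms(3)[OF that] by metis
  qed
  have "(\<lambda>w. g w / (2 * of_real pi * \<i>)) holomorphic_on ball 0 R"
    by (rule holomorphic_on_divide[OF g holomorphic_on_const]) simp
  then show ?thesis
    by (rule holomorphic_transform) (rule fg)
qed

lemma contour_integral_circlepath_swap_weighted:
  fixes G :: "complex \<Rightarrow> complex \<Rightarrow> complex"
  assumes "0 \<le> R" and G: "continuous_on (sphere 0 R \<times> sphere 0 R) (\<lambda>(\<tau>, \<sigma>). G \<tau> \<sigma>)"
    and \<alpha>: "continuous_on (sphere 0 R) \<alpha>" and \<beta>: "continuous_on (sphere 0 R) \<beta>"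
  shows "contour_integral (circlepath 0 R) (\<lambda>\<tau>. contour_integral (circlepath 0 R) (\<lambda>\<sigma>. G \<tau> \<sigma> * \<beta> \<sigma>) * \<alpha> \<tau>) =
         contour_integral (circlepath 0 R) (\<lambda>\<sigma>. contour_integral (circlepath 0 R) (\<lambda>\<tau>. G \<tau> \<sigma> * \<alpha> \<tau>) * \<beta> \<sigma>)"
proof -
  let ?\<gamma> = "circlepath (0::complex) R"
  have sph: "path_image ?\<gamma> = sphere 0 R" using assms(1) by simp
  have "continuous_on (sphere 0 R \<times> sphere 0 R) (\<lambda>p. \<alpha> (fst p))"
    by (rule continuous_on_compose2[OF \<alpha> continuous_on_fst]) auto
  moreover have "continuous_on (sphere 0 R \<times> sphere 0 R) (\<lambda>p. \<beta> (snd p))"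
    by (rule continuous_on_compose2[OF \<beta> continuous_on_snd]) auto
  ultimately have cont: "continuous_on (sphere 0 R \<times> sphere 0 R) (\<lambda>(\<tau>, \<sigma>). G \<tau> \<sigma> * \<beta> \<sigma> * \<alpha> \<tau>)"
    using G by (auto simp: split_beta intro!: continuous_intros)
  have slice1: "continuous_on (sphere 0 R) (\<lambda>\<sigma>. G \<tau> \<sigma> * \<beta> \<sigma>)" if "\<tau> \<in> sphere 0 R" for \<tau>
  proof -
    have "continuous_on (sphere 0 R) (\<lambda>\<sigma>. (\<lambda>(\<tau>, \<sigma>). G \<tau> \<sigma>) (\<tau>, \<sigma>))"
      by (rule continuous_on_compose2[OF G]) (use that in \<open>auto intro!: continuous_intros\<close>)
    then show ?thesis using \<beta> by (auto intro!: continuous_intros)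
  qed
  have slice2: "continuous_on (sphere 0 R) (\<lambda>\<tau>. G \<tau> \<sigma> * \<alpha> \<tau>)" if "\<sigma> \<in> sphere 0 R" for \<sigma>
  proof -
    have "continuous_on (sphere 0 R) (\<lambda>\<tau>. (\<lambda>(\<tau>, \<sigma>). G \<tau> \<sigma>) (\<tau>, \<sigma>))"
      by (rule continuous_on_compose2[OF G]) (use that in \<open>auto intro!: continuous_intros\<close>)
    then show ?thesis using \<alpha> by (auto intro!: continuous_intros)
  qed
  have "contour_integral ?\<gamma> (\<lambda>\<tau>. contour_integral ?\<gamma> (\<lambda>\<sigma>. G \<tau> \<sigma> * \<beta> \<sigma>) * \<alpha> \<tau>) =
        contour_integral ?\<gamma> (\<lambda>\<tau>. contour_integral ?\<gamma> (\<lambda>\<sigma>. G \<tau> \<sigma> * \<beta> \<sigma> * \<alpha> \<tau>))"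
    using slice1 sph
    by (intro contour_integral_eq contour_integral_rmul[symmetric] contour_integrable_continuous_circlepath) auto
  also have "\<dots> = contour_integral ?\<gamma> (\<lambda>\<sigma>. contour_integral ?\<gamma> (\<lambda>\<tau>. G \<tau> \<sigma> * \<beta> \<sigma> * \<alpha> \<tau>))"
    by (rule contour_integral_swap) (use cont sph in \<open>auto simp: vector_derivative_circlepath intro!: continuous_intros\<close>)
  also have "\<dots> = contour_integral ?\<gamma> (\<lambda>\<sigma>. contour_integral ?\<gamma> (\<lambda>\<tau>. G \<tau> \<sigma> * \<alpha> \<tau>) * \<beta> \<sigma>)"
    using slice2 sph
    by (intro contour_integral_eq, subst contour_integral_rmul[symmetric])
      (auto simp: mult_ac intro: contour_integrable_continuous_circlepath)
  finally show ?thesis .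
qed

section \<open>Separately holomorphic functions of two variables\<close>

locale separately_holomorphic =
  fixes R :: real and G :: "complex \<Rightarrow> complex \<Rightarrow> complex"
  assumes radius_pos: "0 < R"
    and continuous: "continuous_on (cball 0 R \<times> cball 0 R) (\<lambda>(t, s). G t s)"
    and holomorphic_left: "\<And>s. s \<in> cball 0 R \<Longrightarrow> (\<lambda>t. G t s) holomorphic_on ball 0 R"
    and holomorphic_right: "\<And>t. t \<in> cball 0 R \<Longrightarrow> (\<lambda>s. G t s) holomorphic_on ball 0 R"
begin

lemma swap: "separately_holomorphic R (\<lambda>s t. G t s)"
proof
  have "continuous_on (cball 0 R \<times> cball 0 R) ((\<lambda>(t, s). G t s) \<circ> prod.swap)"
    by (rule continuous_on_compose[OF continuous_on_swap], rule continuous_on_subset[OF continuous]) auto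
  then show "continuous_on (cball 0 R \<times> cball 0 R) (\<lambda>(s, t). G t s)"
    by (simp add: o_def split_beta)
qed (use radius_pos holomorphic_left holomorphic_right in auto)

lemma continuous_on_spheres: "continuous_on (sphere 0 R \<times> sphere 0 R) (\<lambda>(t, s). G t s)"
  by (rule continuous_on_subset[OF continuous]) auto

lemma continuous_on_left_slice:
  assumes "s \<in> cball 0 R" shows "continuous_on (cball 0 R) (\<lambda>t. G t s)"
proof -
  have "continuous_on (cball 0 R) (\<lambda>t. (\<lambda>(t, s). G t s) (t, s))"
    by (rule continuous_on_compose2[OF continuous]) (use assms in \<open>auto intro!: continuous_intros\<close>)
  then show ?thesis by simp
qed

lemma continuous_on_right_slice:
  assumes "t \<in> cball 0 R" shows "continuous_on (cball 0 R) (\<lambda>s. G t s)"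
proof -
  have "continuous_on (cball 0 R) (\<lambda>s. (\<lambda>(t, s). G t s) (t, s))"
    by (rule continuous_on_compose2[OF continuous]) (use assms in \<open>auto intro!: continuous_intros\<close>)
  then show ?thesis by simp
qed

lemma deriv_left_eq_integral:
  assumes "s \<in> cball 0 R"
  shows "deriv (\<lambda>t. G t s) 0 = contour_integral (circlepath 0 R) (\<lambda>\<tau>. G \<tau> s / (2 * of_real pi * \<i> * \<tau>^2))"
  by (rule deriv_0_eq_circlepath_integral[OF continuous_on_left_slice[OF assms] holomorphic_left[OF assms] radius_pos])

lemma continuous_on_deriv_left: "continuous_on (cball 0 R) (\<lambda>s. deriv (\<lambda>t. G t s) 0)"
proof -
  have "continuous_on (cball 0 R \<times> sphere 0 R) ((\<lambda>(t, s). G t s) \<circ> prod.swap)"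
    by (rule continuous_on_compose[OF continuous_on_swap], rule continuous_on_subset[OF continuous]) auto
  then have "continuous_on (cball 0 R \<times> sphere 0 R) (\<lambda>(s, \<tau>). G \<tau> s / (2 * of_real pi * \<i> * \<tau>^2))"
    using radius_pos by (auto simp: o_def split_beta intro!: continuous_intros)
  then have "continuous_on (cball 0 R) (\<lambda>s. contour_integral (circlepath 0 R) (\<lambda>\<tau>. G \<tau> s / (2 * of_real pi * \<i> * \<tau>^2)))"
    using radius_pos by (intro continuous_on_circlepath_integral_param) auto
  then show ?thesis
    by (rule continuous_on_eq) (simp add: deriv_left_eq_integral)
qed

text \<open>Fubini for the two circle integrals turns Cauchy's formula in the second variable into
  Cauchy's formula for the derivative in the first one.\<close>
lemma Cauchy_integral_deriv_left:
  assumes w: "w \<in> ball 0 R"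
  shows "deriv (\<lambda>t. G t w) 0 = contour_integral (circlepath 0 R)
           (\<lambda>\<sigma>. deriv (\<lambda>t. G t \<sigma>) 0 / (2 * of_real pi * \<i> * (\<sigma> - w)))"
proof -
  let ?\<gamma> = "circlepath (0::complex) R"
  let ?\<alpha> = "\<lambda>\<tau>::complex. 1 / (2 * of_real pi * \<i> * \<tau>^2)"
  let ?\<beta> = "\<lambda>\<sigma>. 1 / (2 * of_real pi * \<i> * (\<sigma> - w))"
  have "deriv (\<lambda>t. G t w) 0 = contour_integral ?\<gamma> (\<lambda>\<tau>. G \<tau> w * ?\<alpha> \<tau>)"
    using deriv_left_eq_integral[of w] w by simp
  also have "\<dots> = contour_integral ?\<gamma> (\<lambda>\<tau>. contour_integral ?\<gamma> (\<lambda>\<sigma>. G \<tau> \<sigma> * ?\<beta> \<sigma>) * ?\<alpha> \<tau>)"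
  proof (rule contour_integral_eq)
    fix \<tau> assume "\<tau> \<in> path_image ?\<gamma>"
    then have "\<tau> \<in> cball 0 R" using radius_pos by simp
    then show "G \<tau> w * ?\<alpha> \<tau> = contour_integral ?\<gamma> (\<lambda>\<sigma>. G \<tau> \<sigma> * ?\<beta> \<sigma>) * ?\<alpha> \<tau>"
      using Cauchy_integral_formula_circlepath_0[OF continuous_on_right_slice holomorphic_right w] by simp
  qed
  also have "\<dots> = contour_integral ?\<gamma> (\<lambda>\<sigma>. contour_integral ?\<gamma> (\<lambda>\<tau>. G \<tau> \<sigma> * ?\<alpha> \<tau>) * ?\<beta> \<sigma>)"
    using radius_pos w
    by (intro contour_integral_circlepath_swap_weighted continuous_on_spheres continuous_intros) auto
  also have "\<dots> = contour_integral ?\<gamma> (\<lambda>\<sigma>. deriv (\<lambda>t. G t \<sigma>) 0 / (2 * of_real pi * \<i> * (\<sigma> - w)))"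
    using radius_pos by (intro contour_integral_eq) (simp add: deriv_left_eq_integral)
  finally show ?thesis .
qed

lemma holomorphic_on_deriv_left: "(\<lambda>s. deriv (\<lambda>t. G t s) 0) holomorphic_on ball 0 R"
  using radius_pos
  by (intro holomorphic_on_ball_if_Cauchy_integral Cauchy_integral_deriv_left
      continuous_on_subset[OF continuous_on_deriv_left]) auto

lemma deriv_deriv_left_eq_integral:
  "deriv (\<lambda>s. deriv (\<lambda>t. G t s) 0) 0 = contour_integral (circlepath 0 R)
     (\<lambda>\<sigma>. contour_integral (circlepath 0 R) (\<lambda>\<tau>. G \<tau> \<sigma> / (2 * of_real pi * \<i> * \<tau>^2)) / (2 * of_real pi * \<i> * \<sigma>^2))"
  unfolding deriv_0_eq_circlepath_integral[OF continuous_on_deriv_left holomorphic_on_deriv_left radius_pos]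
proof (rule contour_integral_eq)
  fix \<sigma> assume "\<sigma> \<in> path_image (circlepath 0 R)"
  then have "\<sigma> \<in> cball 0 R" using radius_pos by simp
  then show "deriv (\<lambda>t. G t \<sigma>) 0 / (2 * of_real pi * \<i> * \<sigma>^2) = contour_integral (circlepath 0 R)
      (\<lambda>\<tau>. G \<tau> \<sigma> / (2 * of_real pi * \<i> * \<tau>^2)) / (2 * of_real pi * \<i> * \<sigma>^2)"
    by (simp add: deriv_left_eq_integral)
qed

lemma holomorphic_on_deriv_right: "(\<lambda>t. deriv (\<lambda>s. G t s) 0) holomorphic_on ball 0 R"
  using separately_holomorphic.holomorphic_on_deriv_left[OF swap] .

lemma mixed_derivs_eq:
  "deriv (\<lambda>s. deriv (\<lambda>t. G t s) 0) 0 = deriv (\<lambda>t. deriv (\<lambda>s. G t s) 0) 0"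
proof -
  let ?\<alpha> = "\<lambda>\<tau>::complex. 1 / (2 * of_real pi * \<i> * \<tau>^2)"
  have "contour_integral (circlepath 0 R) (\<lambda>\<sigma>. contour_integral (circlepath 0 R) (\<lambda>\<tau>. G \<tau> \<sigma> * ?\<alpha> \<tau>) * ?\<alpha> \<sigma>) =
        contour_integral (circlepath 0 R) (\<lambda>\<tau>. contour_integral (circlepath 0 R) (\<lambda>\<sigma>. G \<tau> \<sigma> * ?\<alpha> \<sigma>) * ?\<alpha> \<tau>)"
    using radius_pos
    by (intro contour_integral_circlepath_swap_weighted[symmetric] continuous_on_spheres continuous_intros) auto
  then show ?thesis
    using deriv_deriv_left_eq_integral separately_holomorphic.deriv_deriv_left_eq_integral[OF swap]
    by simp
qed

end

section \<open>Derivative of a bounded holomorphic function with two zeros\<close>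

text \<open>Since \<open>\<psi>\<close> vanishes at \<open>0\<close> and \<open>a\<close>, the integral of \<open>\<psi> u / (u (u - a))\<close> over the circle vanishes,
  so \<open>2 \<pi> i \<psi>'(0) = \<integral> \<psi> u / u\<^sup>2\<close> equals \<open>-a \<integral> \<psi> u / (u\<^sup>2 (u - a))\<close>, which is small with \<open>a\<close>.\<close>
lemma norm_deriv_0_le_two_zeros_near:
  fixes \<psi> :: "complex \<Rightarrow> complex"
  assumes holo: "\<psi> holomorphic_on ball 0 R" and r: "0 < r" "r < R"
    and bnd: "\<And>z. z \<in> ball 0 R \<Longrightarrow> norm (\<psi> z) \<le> B"
    and zeros: "\<psi> 0 = 0" "\<psi> a = 0" and a: "norm a < r" "a \<noteq> 0"
  shows "norm (deriv \<psi> 0) \<le> B * norm a / (r * (r - norm a))"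
proof -
  let ?\<gamma> = "circlepath (0::complex) r"
  have cont: "continuous_on (cball 0 r) \<psi>"
    by (rule continuous_on_subset[OF holomorphic_on_imp_continuous_on[OF holo]]) (use r in auto)
  have hol: "\<psi> holomorphic_on ball 0 r"
    by (rule holomorphic_on_subset[OF holo]) (use r in auto)
  define h where "h u = (\<psi> u / (u - a) - \<psi> u / (u - 0)) / a - \<psi> u / (u - 0) ^ Suc 1" for u
  have "(h has_contour_integral ((0 - 0) / a - 2 * pi * \<i> / fact 1 * (deriv ^^ 1) \<psi> 0)) ?\<gamma>"
    unfolding h_def
    using Cauchy_integral_circlepath[OF cont hol, of a] Cauchy_integral_circlepath[OF cont hol, of 0]
      Cauchy_has_contour_integral_higher_derivative_circlepath[OF cont hol, of 0 1] zeros a r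
    by (intro has_contour_integral_diff has_contour_integral_div) auto
  then have int: "(h has_contour_integral - (2 * pi * \<i> * deriv \<psi> 0)) ?\<gamma>"
    by simp
  have B0: "0 \<le> B" using bnd[of 0] r by (auto intro: order_trans[OF norm_ge_zero])
  have "norm (h x) \<le> B * norm a / (r^2 * (r - norm a))" if x: "norm (x - 0) = r" for x
  proof -
    have "x \<noteq> 0" "x \<noteq> a" using x r a by auto
    then have "h x = a * \<psi> x / (x^2 * (x - a))"
      using a(2) by (simp add: h_def field_simps power2_eq_square)
    then have "norm (h x) = norm a * norm (\<psi> x) / (r^2 * norm (x - a))"
      using x by (simp add: norm_mult norm_divide norm_power)
    also have "\<dots> \<le> norm a * B / (r^2 * (r - norm a))"
      using bnd[of x] x r a B0 norm_triangle_ineq2[of x a]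
      by (intro frac_le mult_left_mono mult_pos_pos) auto
    finally show ?thesis by (simp add: mult.commute)
  qed
  from has_contour_integral_bound_circlepath[OF int _ r(1) this] B0 a r
  have "2 * pi * norm (deriv \<psi> 0) \<le> 2 * pi * (B * norm a / (r^2 * (r - norm a)) * r)"
    by (simp add: norm_mult mult_ac)
  then have "norm (deriv \<psi> 0) \<le> B * norm a / (r^2 * (r - norm a)) * r"
    by (rule mult_left_le_imp_le) (use pi_gt_zero in auto)
  also have "\<dots> = B * norm a / (r * (r - norm a))"
    using r by (simp add: power2_eq_square)
  finally show ?thesis .
qed

lemma norm_deriv_0_le_two_zeros:
  fixes \<psi> :: "complex \<Rightarrow> complex"
  assumes holo: "\<psi> holomorphic_on ball 0 R" and r: "0 < r" "r < R"
    and bnd: "\<And>z. z \<in> ball 0 R \<Longrightarrow> norm (\<psi> z) \<le> B"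
    and zeros: "\<psi> 0 = 0" "\<psi> a = 0" and a: "a \<noteq> 0"
  shows "norm (deriv \<psi> 0) \<le> 2 * B * norm a / r^2"
proof -
  have B0: "0 \<le> B" using bnd[of 0] r by (auto intro: order_trans[OF norm_ge_zero])
  show ?thesis
  proof (cases "norm a < r/2")
    case True
    have "norm (deriv \<psi> 0) \<le> B * norm a / (r * (r - norm a))"
      using True r by (intro norm_deriv_0_le_two_zeros_near[OF holo r bnd zeros _ a]) auto
    also have "\<dots> \<le> B * norm a / (r * (r / 2))"
      using True r B0 by (intro divide_left_mono mult_left_mono mult_pos_pos) auto
    finally show ?thesis by (simp add: power2_eq_square mult_ac)
  next
    case False
    have "norm ((deriv ^^ 1) \<psi> 0) \<le> fact 1 * B / r ^ 1"
      using holo r bnd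
      by (intro Cauchy_inequality[OF _ _ r(1)] holomorphic_on_subset[OF holo]
          continuous_on_subset[OF holomorphic_on_imp_continuous_on[OF holo]]) auto
    also have "\<dots> = B * r / r^2" using r by (simp add: power2_eq_square)
    also have "\<dots> \<le> B * (2 * norm a) / r^2"
      using False B0 by (intro divide_right_mono mult_left_mono) auto
    finally show ?thesis by (simp add: mult_ac)
  qed
qed

section \<open>Holomorphic functions on the complex strip\<close>

lemma cvec_add_scaleR: "cvec y + of_real t *s cvec b = cvec (y + t *\<^sub>R b)"
  by (simp add: vec_eq_iff cvec_def vector_scalar_mult_def)

lemma cvec_eq_sum_axis: "cvec u = (\<Sum>j\<in>UNIV. u $ j *\<^sub>R cvec (axis j 1))"
proof -
  have "(\<Sum>j\<in>UNIV. u $ j *\<^sub>R cvec (axis j 1)) $ i = (\<Sum>j\<in>UNIV. if j = i then complex_of_real (u $ j) else 0)" for i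
    unfolding sum_component by (rule sum.cong) (auto simp: cvec_def axis_def of_real_def)
  then show ?thesis by (simp add: vec_eq_iff cvec_def)
qed

lemma Im_line_component: "Im ((q + t *s cvec a) $ j) = Im (q $ j) + Im t * a $ j"
  by (simp add: cvec_def vector_scalar_mult_def)

lemma holo_onE:
  assumes "holo_on F S" "z \<in> S"
  obtains L where "(F has_derivative L) (at z)" "\<forall>h. L (\<chi> j. \<i> * h $ j) = \<i> * L h"
  using assms unfolding holo_on_def by blast

lemma holo_on_imp_continuous_on:
  assumes "holo_on F S" "A \<subseteq> S"
  shows "continuous_on A F"
proof (rule continuous_at_imp_continuous_on, rule ballI)
  fix z assume "z \<in> A"
  then obtain L where "(F has_derivative L) (at z)"
    using holo_onE[OF assms(1)] assms(2) by blast
  then show "isCont F z" by (rule has_derivative_continuous)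
qed

lemma has_field_derivative_along_line:
  fixes F :: "complex^'n \<Rightarrow> complex"
  assumes FL: "(F has_derivative L) (at (q + t0 *s a))" and CL: "\<forall>h. L (\<chi> j. \<i> * h $ j) = \<i> * L h"
  shows "((\<lambda>t. F (q + t *s a)) has_field_derivative L a) (at t0)"
proof -
  have lin: "linear L" using FL has_derivative_bounded_linear bounded_linear.linear by blast
  have line: "q + t *s a = q + Re t *\<^sub>R a + Im t *\<^sub>R (\<i> *s a)" for t
  proof -
    have "t * a $ j = Re t *\<^sub>R a $ j + Im t *\<^sub>R (\<i> * a $ j)" for j
      by (subst complex_eq[of t]) (simp add: scaleR_conv_of_real algebra_simps)
    then show ?thesis by (simp add: vec_eq_iff vector_scalar_mult_def)
  qed
  have "((\<lambda>t. q + t *s a) has_derivative (\<lambda>h. Re h *\<^sub>R a + Im h *\<^sub>R (\<i> *s a))) (at t0)"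
    unfolding line by (auto intro!: derivative_eq_intros)
  from has_derivative_compose[OF this FL]
  have "((\<lambda>t. F (q + t *s a)) has_derivative (\<lambda>h. L (Re h *\<^sub>R a + Im h *\<^sub>R (\<i> *s a)))) (at t0)" .
  moreover have "(\<lambda>h. L (Re h *\<^sub>R a + Im h *\<^sub>R (\<i> *s a))) = (*) (L a)"
  proof
    fix h :: complex
    have "L (\<i> *s a) = \<i> * L a" using CL by (simp add: vector_scalar_mult_def)
    then have "L (Re h *\<^sub>R a + Im h *\<^sub>R (\<i> *s a)) = Re h *\<^sub>R L a + Im h *\<^sub>R (\<i> * L a)"
      using lin by (simp add: linear_add linear_scale)
    also have "\<dots> = (of_real (Re h) + \<i> * of_real (Im h)) * L a"
      by (simp add: scaleR_conv_of_real algebra_simps)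
    also have "\<dots> = L a * h"
      by (subst (2) complex_eq[of h]) (simp add: mult.commute)
    finally show "L (Re h *\<^sub>R a + Im h *\<^sub>R (\<i> *s a)) = L a * h" .
  qed
  ultimately show ?thesis unfolding has_field_derivative_def by simp
qed

lemma holomorphic_on_line:
  fixes F :: "complex^'n \<Rightarrow> complex"
  assumes "holo_on F S" "open T" "\<And>t. t \<in> T \<Longrightarrow> q + t *s a \<in> S"
  shows "(\<lambda>t. F (q + t *s a)) holomorphic_on T"
  unfolding holomorphic_on_open[OF assms(2)]
proof
  fix t assume "t \<in> T"
  then obtain L where "(F has_derivative L) (at (q + t *s a))" "\<forall>h. L (\<chi> j. \<i> * h $ j) = \<i> * L h"
    using holo_onE[OF assms(1) assms(3)] by blast
  from has_field_derivative_along_line[OF this]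
  show "\<exists>f'. ((\<lambda>t. F (q + t *s a)) has_field_derivative f') (at t)" by blast
qed

lemma deriv_along_line_eq_sum_axis:
  fixes F :: "complex^'n \<Rightarrow> complex"
  assumes "holo_on F S" "z \<in> S"
  shows "deriv (\<lambda>s. F (z + s *s cvec u)) 0
           = (\<Sum>j\<in>UNIV. of_real (u $ j) * deriv (\<lambda>s. F (z + s *s cvec (axis j 1))) 0)"
proof -
  obtain L where L: "(F has_derivative L) (at z)" "\<forall>h. L (\<chi> j. \<i> * h $ j) = \<i> * L h"
    using holo_onE[OF assms] by blast
  have lin: "linear L" using L(1) has_derivative_bounded_linear bounded_linear.linear by blast
  have "deriv (\<lambda>s. F (z + s *s a)) 0 = L a" for a
    using has_field_derivative_along_line[of F L z 0 a] L by (simp add: DERIV_imp_deriv)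
  moreover have "L (cvec u) = (\<Sum>j\<in>UNIV. u $ j *\<^sub>R L (cvec (axis j 1)))"
    by (subst cvec_eq_sum_axis) (simp add: linear_sum[OF lin] linear_scale[OF lin])
  ultimately show ?thesis by (simp add: scaleR_conv_of_real)
qed

lemma has_real_derivative_if_real_on_reals:
  assumes g: "(g has_field_derivative D) (at (of_real t0))" and gf: "\<And>t. g (of_real t) = of_real (f t)"
  shows "(f has_real_derivative Re D) (at t0)" and "D = of_real (Re D)"
proof -
  have "((\<lambda>t. complex_of_real (f t)) has_vector_derivative D) (at t0)"
    using has_vector_derivative_real_field[OF g, of UNIV] by (simp add: gf)
  note vd = has_field_derivative_Re[OF this] has_field_derivative_Im[OF this]
  show "(f has_real_derivative Re D) (at t0)" using vd(1) by simp
  have "((\<lambda>t. 0::real) has_real_derivative Im D) (at t0)" using vd(2) by simp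
  then have "Im D = 0" using DERIV_const DERIV_unique by blast
  then show "D = of_real (Re D)" by (simp add: complex_eq_iff)
qed

lemma deriv_along_real_line:
  fixes F :: "complex^'n \<Rightarrow> complex" and V :: "real^'n \<Rightarrow> real"
  assumes "holo_on F S" "cvec y \<in> S" and FV: "\<forall>x. F (cvec x) = of_real (V x)"
  shows "deriv (\<lambda>s. F (cvec y + s *s cvec b)) 0 = of_real (deriv (\<lambda>t. V (y + t *\<^sub>R b)) 0)"
proof -
  obtain L where L: "(F has_derivative L) (at (cvec y))" "\<forall>h. L (\<chi> j. \<i> * h $ j) = \<i> * L h"
    using holo_onE[OF assms(1,2)] by blast
  have d: "((\<lambda>s. F (cvec y + s *s cvec b)) has_field_derivative L (cvec b)) (at (of_real 0))"
    using has_field_derivative_along_line[of F L "cvec y" 0] L by simp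
  have "F (cvec y + of_real t *s cvec b) = of_real (V (y + t *\<^sub>R b))" for t
    by (simp add: cvec_add_scaleR FV)
  note real = has_real_derivative_if_real_on_reals[OF d this]
  show ?thesis
    using DERIV_imp_deriv[OF real(1)] DERIV_imp_deriv[OF d] real(2) by simp
qed

lemma partial_eq_0_if_critical_point:
  assumes "critical_point V x"
  shows "partial V j x = 0"
proof -
  have "((\<lambda>t. x + t *\<^sub>R axis j 1) has_derivative (\<lambda>h. h *\<^sub>R axis j 1)) (at 0)"
    by (auto intro!: derivative_eq_intros)
  from has_derivative_compose[OF this] assms
  have "((\<lambda>t. V (x + t *\<^sub>R axis j 1)) has_derivative (\<lambda>h. 0)) (at 0)"
    by (simp add: critical_point_def)
  moreover have "(\<lambda>h::real. 0::real) = (*) 0" by auto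
  ultimately show ?thesis
    unfolding partial_def by (simp add: has_field_derivative_def DERIV_imp_deriv)
qed

lemma partial_periodic:
  fixes k :: "real^'n"
  assumes "periodic1 V" "\<forall>i. k $ i \<in> \<int>"
  shows "partial V j (x + k) = partial V j x"
proof -
  have "V (x + t *\<^sub>R axis j 1 + k) = V (x + t *\<^sub>R axis j 1)" for t
    using assms unfolding periodic1_def by blast
  then have "V (x + k + t *\<^sub>R axis j 1) = V (x + t *\<^sub>R axis j 1)" for t
    by (simp add: add_ac)
  then show ?thesis unfolding partial_def by simp
qed

lemma holomorphic_vanishing_on_reals:
  assumes "f holomorphic_on {t. \<bar>Im t\<bar> < r}" "\<And>x. f (of_real x) = 0" "\<bar>Im w\<bar> < r"
  shows "f w = 0"
proof -
  have T: "{t. \<bar>Im t\<bar> < r} = {t. inner \<i> t < r} \<inter> {t. inner \<i> t > -r}"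
    by (auto simp: inner_complex_def)
  have op: "open {t. \<bar>Im t\<bar> < r}"
    unfolding T by (intro open_Int open_halfspace_lt open_halfspace_gt)
  have conn: "connected {t. \<bar>Im t\<bar> < r}"
    unfolding T by (intro convex_connected convex_Int convex_halfspace_lt convex_halfspace_gt)
  have sub: "\<real> \<subseteq> {t. \<bar>Im t\<bar> < r}"
    using assms(3) by (auto elim!: Reals_cases)
  have lim: "0 islimpt (\<real>::complex set)"
  proof (unfold islimpt_approachable, intro allI impI)
    fix e :: real assume "0 < e"
    have "complex_of_real (e/2) \<in> \<real>" by simp
    moreover have "complex_of_real (e/2) \<noteq> 0 \<and> dist (complex_of_real (e/2)) 0 < e"
      using \<open>0 < e\<close> by (simp add: dist_norm)
    ultimately show "\<exists>x'::complex\<in>\<real>. x' \<noteq> 0 \<and> dist x' 0 < e"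
      by (rule rev_bexI)
  qed
  have zero: "f z = 0" if "z \<in> \<real>" for z
    using that assms(2) by (auto elim!: Reals_cases)
  show ?thesis
    by (rule analytic_continuation[OF assms(1) op conn sub _ lim zero]) (use assms(3) in auto)
qed

lemma obtain_scale_gt_1:
  fixes y :: "real^'n"
  assumes "\<forall>j. \<bar>y $ j\<bar> < \<rho>"
  obtains r where "1 < r" "\<forall>j. r * \<bar>y $ j\<bar> < \<rho>"
proof -
  define m where "m = Max (range (\<lambda>j. \<bar>y $ j\<bar>))"
  have ym: "\<bar>y $ j\<bar> \<le> m" for j unfolding m_def by (rule Max_ge) auto
  have "m \<in> range (\<lambda>j. \<bar>y $ j\<bar>)" unfolding m_def by (rule Max_in) auto
  then have m: "0 \<le> m" "m < \<rho>" using assms by auto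
  show ?thesis
  proof
    show "1 < 2 * \<rho> / (\<rho> + m)" using m by (simp add: field_simps)
    show "\<forall>j. 2 * \<rho> / (\<rho> + m) * \<bar>y $ j\<bar> < \<rho>"
    proof
      fix j
      have "2 * \<rho> / (\<rho> + m) * \<bar>y $ j\<bar> \<le> 2 * \<rho> / (\<rho> + m) * m"
        using m ym[of j] by (intro mult_left_mono) auto
      also have "\<dots> < \<rho>" using m by (simp add: field_simps)
      finally show "2 * \<rho> / (\<rho> + m) * \<bar>y $ j\<bar> < \<rho>" .
    qed
  qed
qed

lemma real_line_in_strip:
  fixes u y :: "real^'n"
  assumes "\<forall>j. r * \<bar>y $ j\<bar> < \<rho>" "\<bar>Im t\<bar> < r"
  shows "cvec u + t *s cvec y \<in> strip \<rho>"
proof -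
  have "\<bar>Im t * y $ j\<bar> < \<rho>" for j
  proof -
    have "\<bar>Im t * y $ j\<bar> \<le> r * \<bar>y $ j\<bar>"
      using assms(2) by (simp add: abs_mult mult_right_mono)
    moreover have "r * \<bar>y $ j\<bar> < \<rho>" using assms(1) by blast
    ultimately show ?thesis by simp
  qed
  then show ?thesis by (simp add: strip_def Im_line_component cvec_def)
qed

text \<open>Along the complex line through \<open>z\<close> in the direction of its imaginary part, the difference of
  \<open>F\<close> and its translate by \<open>k\<close> vanishes on the reals by periodicity of \<open>V\<close>, hence also at \<open>z\<close>.\<close>
lemma holo_on_periodic:
  fixes F :: "complex^'n \<Rightarrow> complex" and V :: "real^'n \<Rightarrow> real" and k :: "real^'n"
  assumes H: "holo_on F (strip \<rho>)" and FV: "\<forall>x. F (cvec x) = of_real (V x)" and P: "periodic1 V"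
    and k: "\<forall>i. k $ i \<in> \<int>" and z: "z \<in> strip \<rho>"
  shows "F (z + cvec k) = F z"
proof -
  define x where "x = (\<chi> j. Re (z $ j))"
  define y where "y = (\<chi> j. Im (z $ j))"
  have zxy: "z = cvec x + \<i> *s cvec y"
    by (simp add: vec_eq_iff x_def y_def cvec_def vector_scalar_mult_def complex_eq_iff)
  have "\<forall>j. \<bar>y $ j\<bar> < \<rho>" using z by (simp add: strip_def y_def)
  then obtain r where r: "1 < r" "\<forall>j. r * \<bar>y $ j\<bar> < \<rho>"
    by (rule obtain_scale_gt_1)
  have line: "cvec u + t *s cvec y \<in> strip \<rho>" if "\<bar>Im t\<bar> < r" for u t
    using r(2) that by (rule real_line_in_strip)
  define f where "f t = F (cvec (x + k) + t *s cvec y) - F (cvec x + t *s cvec y)" for t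
  have "f \<i> = 0"
  proof (rule holomorphic_vanishing_on_reals[of f r])
    show "f holomorphic_on {t. \<bar>Im t\<bar> < r}"
    proof -
      have "open {t::complex. \<bar>Im t\<bar> < r}"
        by (rule open_Collect_less) (intro continuous_intros)+
      then show ?thesis
        unfolding f_def by (intro holomorphic_on_diff holomorphic_on_line[OF H] line) auto
    qed
    fix s :: real
    show "f (of_real s) = 0"
    proof -
      have "V (x + s *\<^sub>R y + k) = V (x + s *\<^sub>R y)" using P k unfolding periodic1_def by blast
      then show ?thesis by (simp add: f_def cvec_add_scaleR FV add_ac)
    qed
  qed (use r in simp)
  moreover have "cvec (x + k) + \<i> *s cvec y = z + cvec k"
    unfolding zxy by (simp add: vec_eq_iff cvec_def vector_scalar_mult_def)
  ultimately show ?thesis by (simp add: f_def zxy)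
qed

lemma strip_decompose:
  fixes z :: "complex^'n"
  assumes "z \<in> strip r"
  obtains x y k :: "real^'n"
  where "x \<in> cbox 0 1" "y \<in> cbox (- (\<chi> j. r)) (\<chi> j. r)" "\<forall>i. k $ i \<in> \<int>"
    and "z = cvec x + \<i> *s cvec y + cvec k"
proof
  show "(\<chi> j. frac (Re (z $ j))) \<in> cbox 0 1"
    by (simp add: mem_box_cart frac_lt_1 less_imp_le)
  have "\<bar>Im (z $ j)\<bar> \<le> r" for j using assms by (simp add: strip_def less_imp_le)
  then show "(\<chi> j. Im (z $ j)) \<in> cbox (- (\<chi> j. r)) (\<chi> j. r)"
    by (simp add: mem_box_cart abs_le_iff minus_le_iff)
  show "\<forall>i. (\<chi> j. of_int \<lfloor>Re (z $ j)\<rfloor>) $ i \<in> (\<int> :: real set)"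
    by simp
  show "z = cvec (\<chi> j. frac (Re (z $ j))) + \<i> *s cvec (\<chi> j. Im (z $ j)) + cvec (\<chi> j. of_int \<lfloor>Re (z $ j)\<rfloor>)"
    by (simp add: vec_eq_iff cvec_def vector_scalar_mult_def frac_def complex_eq_iff)
qed

lemma bdd_above_norm_on_strip:
  fixes F :: "complex^'n \<Rightarrow> complex" and V :: "real^'n \<Rightarrow> real"
  assumes H: "holo_on F (strip \<rho>)" and FV: "\<forall>x. F (cvec x) = of_real (V x)" and P: "periodic1 V"
    and "r < \<rho>"
  shows "bdd_above ((\<lambda>z. cmod (F z)) ` strip r)"
proof -
  define \<Phi> :: "(real^'n) \<times> (real^'n) \<Rightarrow> complex^'n" where "\<Phi> = (\<lambda>(x, y). cvec x + \<i> *s cvec y)"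
  define K where "K = \<Phi> ` (cbox 0 1 \<times> cbox (- (\<chi> j. r)) (\<chi> j. r))"
  have \<Phi>_eq: "\<Phi> = (\<lambda>p. \<chi> j. of_real (fst p $ j) + \<i> * of_real (snd p $ j))"
    by (auto simp: \<Phi>_def fun_eq_iff vec_eq_iff cvec_def vector_scalar_mult_def)
  have "compact K"
    unfolding K_def \<Phi>_eq by (intro compact_continuous_image compact_Times compact_cbox continuous_intros)
  moreover have K: "K \<subseteq> strip \<rho>"
  proof
    fix z assume "z \<in> K"
    then obtain x y where y: "y \<in> cbox (- (\<chi> j. r)) (\<chi> j. r)" and z: "z = \<Phi> (x, y)"
      unfolding K_def by auto
    have "\<bar>Im (z $ j)\<bar> < \<rho>" for j
    proof -
      have "Im (z $ j) = y $ j" by (simp add: z \<Phi>_def cvec_def vector_scalar_mult_def)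
      moreover have "- r \<le> y $ j \<and> y $ j \<le> r" using y by (simp add: mem_box_cart)
      ultimately show ?thesis using assms(4) by arith
    qed
    then show "z \<in> strip \<rho>" by (simp add: strip_def)
  qed
  ultimately have "compact (F ` K)"
    by (intro compact_continuous_image holo_on_imp_continuous_on[OF H])
  then obtain B where B: "\<And>z. z \<in> K \<Longrightarrow> cmod (F z) \<le> B"
    by (meson bounded_iff compact_imp_bounded imageI)
  show ?thesis
  proof (rule bdd_aboveI2)
    fix z :: "complex^'n" assume "z \<in> strip r"
    then obtain x y k :: "real^'n"
      where xy: "x \<in> cbox 0 1" "y \<in> cbox (- (\<chi> j. r)) (\<chi> j. r)" and "\<forall>i. k $ i \<in> \<int>"
        and "z = \<Phi> (x, y) + cvec k"
      by (elim strip_decompose) (simp add: \<Phi>_def)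
    moreover have "\<Phi> (x, y) \<in> K" using xy by (simp add: K_def)
    ultimately have "F z = F (\<Phi> (x, y))"
      using holo_on_periodic[OF H FV P] K by blast
    then show "cmod (F z) \<le> B"
      using B \<open>\<Phi> (x, y) \<in> K\<close> by simp
  qed
qed

section \<open>The Hessian at a critical point\<close>

lemma line_pair_in_strip:
  fixes x a b :: "real^'n"
  assumes "\<forall>j. \<bar>a $ j\<bar> \<le> 1" "\<forall>j. \<bar>b $ j\<bar> \<le> 1" "cmod t + cmod s < r"
  shows "cvec x + t *s cvec a + s *s cvec b \<in> strip r"
proof -
  have "\<bar>Im t * a $ j + Im s * b $ j\<bar> < r" for j
  proof -
    have "\<bar>Im w * c $ j\<bar> \<le> cmod w" if "\<bar>c $ j\<bar> \<le> 1" for w c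
      using that mult_left_le[OF that abs_ge_zero[of "Im w"]] abs_Im_le_cmod[of w]
      by (simp add: abs_mult)
    then have "\<bar>Im t * a $ j\<bar> \<le> cmod t" "\<bar>Im s * b $ j\<bar> \<le> cmod s"
      using assms(1,2) by blast+
    then show ?thesis using assms(3) by linarith
  qed
  then show ?thesis by (simp add: strip_def cvec_def vector_scalar_mult_def)
qed

lemma separately_holomorphic_along_lines:
  fixes F :: "complex^'n \<Rightarrow> complex" and x a b :: "real^'n"
  assumes H: "holo_on F (strip \<rho>)" and "0 < \<rho>"
    and a: "\<forall>j. \<bar>a $ j\<bar> \<le> 1" and b: "\<forall>j. \<bar>b $ j\<bar> \<le> 1"
  shows "separately_holomorphic (\<rho>/4) (\<lambda>t s. F (cvec x + t *s cvec a + s *s cvec b))"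
proof
  have mem: "cvec x + t *s cvec a + s *s cvec b \<in> strip \<rho>" if "cmod t \<le> \<rho>/4" "cmod s \<le> \<rho>/4" for t s
    using that \<open>0 < \<rho>\<close> by (intro line_pair_in_strip[OF a b]) auto
  show "0 < \<rho>/4" using \<open>0 < \<rho>\<close> by simp
  have "continuous_on (cball 0 (\<rho>/4) \<times> cball 0 (\<rho>/4))
          (\<lambda>p. \<chi> j. cvec x $ j + fst p * cvec a $ j + snd p * cvec b $ j)"
    by (intro continuous_intros)
  then have "continuous_on (cball 0 (\<rho>/4) \<times> cball 0 (\<rho>/4)) (\<lambda>p. cvec x + fst p *s cvec a + snd p *s cvec b)"
    by (simp add: vector_scalar_mult_def plus_vec_def)
  moreover have "(\<lambda>p. cvec x + fst p *s cvec a + snd p *s cvec b) ` (cball 0 (\<rho>/4) \<times> cball 0 (\<rho>/4)) \<subseteq> strip \<rho>"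
    using mem by auto
  ultimately show "continuous_on (cball 0 (\<rho>/4) \<times> cball 0 (\<rho>/4)) (\<lambda>(t, s). F (cvec x + t *s cvec a + s *s cvec b))"
    using continuous_on_compose2[OF holo_on_imp_continuous_on[OF H subset_refl]] by (simp add: split_beta)
  show "(\<lambda>t. F (cvec x + t *s cvec a + s *s cvec b)) holomorphic_on ball 0 (\<rho>/4)"
    if "s \<in> cball 0 (\<rho>/4)" for s
  proof -
    have "(\<lambda>t. F ((cvec x + s *s cvec b) + t *s cvec a)) holomorphic_on ball 0 (\<rho>/4)"
      by (rule holomorphic_on_line[OF H open_ball]) (use that mem in \<open>auto simp: add_ac\<close>)
    then show ?thesis by (simp add: add_ac)
  qed
  show "(\<lambda>s. F (cvec x + t *s cvec a + s *s cvec b)) holomorphic_on ball 0 (\<rho>/4)"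
    if "t \<in> cball 0 (\<rho>/4)" for t
    using that mem by (intro holomorphic_on_line[OF H open_ball]) auto
qed

lemma norm_deriv_along_line_le:
  fixes F :: "complex^'n \<Rightarrow> complex" and x a b :: "real^'n"
  assumes H: "holo_on F (strip \<rho>)" and \<rho>: "0 < \<rho>"
    and a: "\<forall>j. \<bar>a $ j\<bar> \<le> 1" and b: "\<forall>j. \<bar>b $ j\<bar> \<le> 1"
    and M: "\<And>z. z \<in> strip (3 * \<rho> / 4) \<Longrightarrow> cmod (F z) \<le> M" and s: "s \<in> ball 0 (\<rho>/4)"
  shows "cmod (deriv (\<lambda>t. F (cvec x + t *s cvec a + s *s cvec b)) 0) \<le> 4 * M / \<rho>"
proof -
  interpret separately_holomorphic "\<rho>/4" "\<lambda>t s. F (cvec x + t *s cvec a + s *s cvec b)"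
    by (rule separately_holomorphic_along_lines[OF H \<rho> a b])
  have "cvec x + t *s cvec a + s *s cvec b \<in> strip (3 * \<rho> / 4)" if "cmod t = \<rho>/4" for t
    using s that \<rho> by (intro line_pair_in_strip a b) auto
  then have "norm ((deriv ^^ 1) (\<lambda>t. F (cvec x + t *s cvec a + s *s cvec b)) 0) \<le> fact 1 * M / (\<rho>/4) ^ 1"
    using s \<rho> M
    by (intro Cauchy_inequality holomorphic_left continuous_on_left_slice) (auto simp: norm_minus_commute)
  then show ?thesis by (simp add: mult.commute)
qed

lemma deriv_along_axis_eq_partial:
  fixes F :: "complex^'n \<Rightarrow> complex" and V :: "real^'n \<Rightarrow> real"
  assumes "holo_on F (strip \<rho>)" "0 < \<rho>" "\<forall>x. F (cvec x) = of_real (V x)"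
  shows "deriv (\<lambda>t. F (cvec y + t *s cvec (axis i 1))) 0 = of_real (partial V i y)"
  unfolding partial_def
  using assms by (intro deriv_along_real_line) (auto simp: strip_def cvec_def)

lemma hessian_entry_eq_mixed_deriv:
  fixes F :: "complex^'n \<Rightarrow> complex" and V :: "real^'n \<Rightarrow> real"
  assumes H: "holo_on F (strip \<rho>)" and \<rho>: "0 < \<rho>" and FV: "\<forall>x. F (cvec x) = of_real (V x)"
  shows "hessian V x $ i $ j =
           Re (deriv (\<lambda>t. deriv (\<lambda>s. F (cvec x + t *s cvec (axis i 1) + s *s cvec (axis j 1))) 0) 0)"
proof -
  let ?G = "\<lambda>t s. F (cvec x + t *s cvec (axis i 1) + s *s cvec (axis j 1))"
  interpret separately_holomorphic "\<rho>/4" ?G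
    by (rule separately_holomorphic_along_lines[OF H \<rho>]) (simp_all add: axis_def)
  define \<Phi> where "\<Phi> = (\<lambda>t. deriv (\<lambda>s. ?G t s) 0)"
  have "(\<Phi> has_field_derivative deriv \<Phi> 0) (at (of_real 0))"
    using holomorphic_derivI[OF holomorphic_on_deriv_right open_ball, of 0] \<rho> unfolding \<Phi>_def by simp
  moreover have "\<Phi> (of_real t) = of_real (partial V j (x + t *\<^sub>R axis i 1))" for t
    using deriv_along_axis_eq_partial[OF H \<rho> FV, of "x + t *\<^sub>R axis i 1" j]
    by (simp add: \<Phi>_def cvec_add_scaleR[symmetric])
  ultimately have "((\<lambda>t. partial V j (x + t *\<^sub>R axis i 1)) has_real_derivative Re (deriv \<Phi> 0)) (at 0)"
    by (rule has_real_derivative_if_real_on_reals(1))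
  then show ?thesis
    by (simp add: hessian_def partial_def[of "partial V j"] DERIV_imp_deriv \<Phi>_def)
qed

text \<open>The symmetry of mixed derivatives is what turns the derivative of the \<open>i\<close>-th partial derivative
  along \<open>u\<close> into the \<open>i\<close>-th row of the Hessian applied to \<open>u\<close>.\<close>
lemma hessian_mult_eq_mixed_deriv:
  fixes F :: "complex^'n \<Rightarrow> complex" and V :: "real^'n \<Rightarrow> real" and u :: "real^'n"
  assumes H: "holo_on F (strip \<rho>)" and \<rho>: "0 < \<rho>" and FV: "\<forall>x. F (cvec x) = of_real (V x)"
    and u: "\<forall>j. \<bar>u $ j\<bar> \<le> 1"
  shows "(hessian V x *v u) $ i =
           Re (deriv (\<lambda>s. deriv (\<lambda>t. F (cvec x + t *s cvec (axis i 1) + s *s cvec u)) 0) 0)"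
proof -
  let ?e = "\<lambda>j. cvec (axis j (1::real)) :: complex^'n"
  have e: "\<forall>j. \<bar>axis i (1::real) $ j\<bar> \<le> 1" for i by (simp add: axis_def)
  let ?G = "\<lambda>t s. F (cvec x + t *s ?e i + s *s cvec u)"
  interpret separately_holomorphic "\<rho>/4" ?G
    by (rule separately_holomorphic_along_lines[OF H \<rho> e u])
  define \<Phi> where "\<Phi> j = (\<lambda>t. deriv (\<lambda>s. F (cvec x + t *s ?e i + s *s ?e j)) 0)" for j
  have "\<Phi> j holomorphic_on ball 0 (\<rho>/4)" for j
    unfolding \<Phi>_def
    by (rule separately_holomorphic.holomorphic_on_deriv_right[OF separately_holomorphic_along_lines[OF H \<rho> e e]])
  then have "(\<Phi> j has_field_derivative deriv (\<Phi> j) 0) (at 0)" for j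
    by (rule holomorphic_derivI[OF _ open_ball]) (use \<rho> in simp)
  then have sum: "((\<lambda>t. \<Sum>j\<in>UNIV. of_real (u $ j) * \<Phi> j t) has_field_derivative
               (\<Sum>j\<in>UNIV. of_real (u $ j) * deriv (\<Phi> j) 0)) (at 0)"
    by (intro DERIV_sum DERIV_cmult)
  have "deriv (\<lambda>s. ?G t s) 0 = (\<Sum>j\<in>UNIV. of_real (u $ j) * \<Phi> j t)" if "t \<in> ball 0 (\<rho>/4)" for t
  proof -
    have "cvec x + t *s ?e i + 0 *s ?e i \<in> strip \<rho>"
      using that \<rho> by (intro line_pair_in_strip e) auto
    then show ?thesis
      unfolding \<Phi>_def by (intro deriv_along_line_eq_sum_axis[OF H]) simp
  qed
  then have "((\<lambda>t. deriv (\<lambda>s. ?G t s) 0) has_field_derivative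
                     (\<Sum>j\<in>UNIV. of_real (u $ j) * deriv (\<Phi> j) 0)) (at 0)"
    by (intro has_field_derivative_transform_within_open[OF sum open_ball[of 0 "\<rho>/4"]]) (use \<rho> in auto)
  then have "deriv (\<lambda>s. deriv (\<lambda>t. ?G t s) 0) 0 = (\<Sum>j\<in>UNIV. of_real (u $ j) * deriv (\<Phi> j) 0)"
    unfolding mixed_derivs_eq by (rule DERIV_imp_deriv)
  moreover have "hessian V x $ i $ j = Re (deriv (\<Phi> j) 0)" for j
    unfolding \<Phi>_def by (rule hessian_entry_eq_mixed_deriv[OF H \<rho> FV])
  ultimately show ?thesis
    by (simp add: matrix_vector_mult_def Re_sum mult.commute)
qed

text \<open>The function \<open>\<Psi>\<close> below continues \<open>s \<mapsto> \<partial>\<^sub>i V (x + s sgn \<delta>)\<close> holomorphically; it vanishes at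
  \<open>s = 0\<close> and \<open>s = |\<delta>|\<close>, which makes its derivative at \<open>0\<close> of order \<open>|\<delta>|\<close>.\<close>
lemma abs_hessian_mult_sgn_le:
  fixes F :: "complex^'n \<Rightarrow> complex" and V :: "real^'n \<Rightarrow> real" and x \<delta> :: "real^'n"
  assumes H: "holo_on F (strip \<rho>)" and \<rho>: "0 < \<rho>" and FV: "\<forall>x. F (cvec x) = of_real (V x)"
    and M: "\<And>z. z \<in> strip (3 * \<rho> / 4) \<Longrightarrow> cmod (F z) \<le> M"
    and crit: "\<And>j. partial V j x = 0" "\<And>j. partial V j (x + \<delta>) = 0" and "\<delta> \<noteq> 0"
  shows "\<bar>(hessian V x *v sgn \<delta>) $ i\<bar> \<le> 512 * M * norm \<delta> / \<rho>^3"
proof -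
  define u where "u = sgn \<delta>"
  have u: "\<forall>j. \<bar>u $ j\<bar> \<le> 1"
    using component_le_norm_cart[of u] \<open>\<delta> \<noteq> 0\<close> by (simp add: u_def norm_sgn)
  have e: "\<forall>j. \<bar>axis i (1::real) $ j\<bar> \<le> 1" by (simp add: axis_def)
  let ?G = "\<lambda>t s. F (cvec x + t *s cvec (axis i 1) + s *s cvec u)"
  interpret separately_holomorphic "\<rho>/4" ?G
    by (rule separately_holomorphic_along_lines[OF H \<rho> e u])
  define \<Psi> where "\<Psi> = (\<lambda>s. deriv (\<lambda>t. ?G t s) 0)"
  have \<Psi>_real: "\<Psi> (of_real r) = of_real (partial V i (x + r *\<^sub>R u))" for r
  proof -
    have "?G t (of_real r) = F (cvec (x + r *\<^sub>R u) + t *s cvec (axis i 1))" for t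
      by (simp add: cvec_add_scaleR[symmetric] add_ac)
    then show ?thesis
      using deriv_along_axis_eq_partial[OF H \<rho> FV] by (simp add: \<Psi>_def)
  qed
  have "x + norm \<delta> *\<^sub>R u = x + \<delta>"
    using \<open>\<delta> \<noteq> 0\<close> by (simp add: u_def sgn_div_norm)
  then have zeros: "\<Psi> 0 = 0" "\<Psi> (of_real (norm \<delta>)) = 0"
    using \<Psi>_real[of 0] \<Psi>_real[of "norm \<delta>"] crit by simp_all
  have "cmod (\<Psi> s) \<le> 4 * M / \<rho>" if "s \<in> ball 0 (\<rho>/4)" for s
    unfolding \<Psi>_def by (rule norm_deriv_along_line_le[OF H \<rho> e u M that])
  then have "cmod (deriv \<Psi> 0) \<le> 2 * (4 * M / \<rho>) * norm (of_real (norm \<delta>) :: complex) / (\<rho>/8)^2"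
    using \<rho> \<open>\<delta> \<noteq> 0\<close>
    by (intro norm_deriv_0_le_two_zeros[OF holomorphic_on_deriv_left[folded \<Psi>_def] _ _ _ zeros]) auto
  also have "\<dots> = 512 * M * norm \<delta> / \<rho>^3"
    using \<rho> by (simp add: power2_eq_square power3_eq_cube field_simps)
  finally have "cmod (deriv \<Psi> 0) \<le> 512 * M * norm \<delta> / \<rho>^3" .
  moreover have "\<bar>(hessian V x *v u) $ i\<bar> \<le> cmod (deriv \<Psi> 0)"
    unfolding hessian_mult_eq_mixed_deriv[OF H \<rho> FV u] \<Psi>_def by (rule abs_Re_le_cmod)
  ultimately show ?thesis by (simp add: u_def)
qed

lemma matrix_inv_mult_left:
  fixes A :: "'a::semiring_1^'n^'n"
  assumes "invertible A"
  shows "matrix_inv A ** A = mat 1"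
proof -
  have "\<exists>A'. A ** A' = mat 1 \<and> A' ** A = mat 1" using assms by (simp add: invertible_def)
  then show ?thesis unfolding matrix_inv_def by (rule someI2_ex) blast
qed

lemma norm_le_onorm_matrix_inv:
  fixes A :: "real^'n^'n"
  assumes "invertible A"
  shows "norm v \<le> onorm (\<lambda>w. matrix_inv A *v w) * norm (A *v v)"
proof -
  have "matrix_inv A *v (A *v v) = v"
    by (simp add: matrix_vector_mul_assoc matrix_inv_mult_left[OF assms])
  then show ?thesis
    using onorm[of "\<lambda>w. matrix_inv A *v w" "A *v v"] by simp
qed

lemma norm_ge_of_critical_points:
  fixes F :: "complex^'n \<Rightarrow> complex" and V :: "real^'n \<Rightarrow> real" and x \<delta> :: "real^'n"
  assumes H: "holo_on F (strip \<rho>)" and \<rho>: "0 < \<rho>" and FV: "\<forall>x. F (cvec x) = of_real (V x)"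
    and M: "\<And>z. z \<in> strip (3 * \<rho> / 4) \<Longrightarrow> cmod (F z) \<le> M"
    and crit: "\<And>j. partial V j x = 0" "\<And>j. partial V j (x + \<delta>) = 0" and "\<delta> \<noteq> 0"
    and inv: "invertible (hessian V x)"
  shows "\<rho>^3 / (512 * CARD('n)) / (onorm (\<lambda>v. matrix_inv (hessian V x) *v v) * (1 + M)) \<le> norm \<delta>"
proof -
  define X where "X = onorm (\<lambda>v. matrix_inv (hessian V x) *v v)"
  have X: "0 \<le> X" unfolding X_def by (intro onorm_pos_le) simp
  have "norm (hessian V x *v sgn \<delta>) \<le> (\<Sum>i\<in>UNIV. \<bar>(hessian V x *v sgn \<delta>) $ i\<bar>)"
    by (rule norm_le_l1_cart)
  also have "\<dots> \<le> CARD('n) * (512 * M * norm \<delta> / \<rho>^3)"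
    using abs_hessian_mult_sgn_le[OF H \<rho> FV M crit \<open>\<delta> \<noteq> 0\<close>] by (intro sum_bounded_above) auto
  finally have bound: "norm (hessian V x *v sgn \<delta>) \<le> CARD('n) * (512 * M * norm \<delta> / \<rho>^3)" .
  have "1 \<le> X * norm (hessian V x *v sgn \<delta>)"
    using norm_le_onorm_matrix_inv[OF inv, of "sgn \<delta>"] \<open>\<delta> \<noteq> 0\<close> by (simp add: X_def norm_sgn)
  also have "\<dots> \<le> X * (CARD('n) * (512 * M * norm \<delta> / \<rho>^3))"
    using bound X by (rule mult_left_mono)
  finally have "1 \<le> X * (CARD('n) * (512 * M * norm \<delta> / \<rho>^3))" .
  then have "\<rho>^3 / (512 * CARD('n)) \<le> X * M * norm \<delta>"
    using \<rho> by (simp add: field_simps)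
  also have "\<dots> \<le> X * (1 + M) * norm \<delta>"
    using X by (intro mult_right_mono mult_left_mono) auto
  finally have *: "\<rho>^3 / (512 * CARD('n)) \<le> X * (1 + M) * norm \<delta>" .
  moreover have "0 < \<rho>^3 / (512 * CARD('n))" using \<rho> by simp
  ultimately have "0 < X * (1 + M)"
    using \<open>\<delta> \<noteq> 0\<close> by (smt (verit) mult_nonpos_nonneg norm_ge_zero)
  with * show ?thesis
    by (simp add: X_def pos_divide_le_eq mult.commute)
qed

lemma torus_dist_ge:
  fixes x y :: "real^'n"
  assumes "\<And>k :: real^'n. \<forall>i. k $ i \<in> \<int> \<Longrightarrow> c \<le> norm (x - y - k)"
  shows "c \<le> torus_dist x y"
  unfolding torus_dist_def
proof (rule cInf_greatest)
  show "{norm (x - y - k) |k. \<forall>i. k $ i \<in> \<int>} \<noteq> {}"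
    by (auto intro!: exI[of _ "0::real^'n"])
qed (use assms in blast)

lemma norm_le_supnorm:
  fixes F :: "complex^'n \<Rightarrow> complex" and V :: "real^'n \<Rightarrow> real"
  assumes "holo_on F (strip \<rho>)" "\<forall>x. F (cvec x) = of_real (V x)" "periodic1 V" "0 < \<rho>"
    and "z \<in> strip (3 * \<rho> / 4)"
  shows "cmod (F z) \<le> supnorm F \<rho>"
  unfolding supnorm_def
  using assms by (intro cSUP_upper bdd_above_norm_on_strip[of F \<rho> V]) auto

lemma torus_dist_critical_points_ge:
  fixes F :: "complex^'n \<Rightarrow> complex" and V :: "real^'n \<Rightarrow> real" and x0 x1 :: "real^'n"
  assumes H: "holo_on F (strip \<rho>)" and \<rho>: "0 < \<rho>" and FV: "\<forall>x. F (cvec x) = of_real (V x)"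
    and P: "periodic1 V" and C: "critical_point V x0" "critical_point V x1"
    and distinct: "\<not> (\<forall>i. x0 $ i - x1 $ i \<in> \<int>)" and inv: "invertible (hessian V x0)"
  shows "\<rho>^3 / (512 * CARD('n)) / (onorm (\<lambda>v. matrix_inv (hessian V x0) *v v) * (1 + supnorm F \<rho>))
           \<le> torus_dist x0 x1"
proof (rule torus_dist_ge)
  fix k :: "real^'n" assume k: "\<forall>i. k $ i \<in> \<int>"
  have crit1: "partial V j (x0 + (x1 + k - x0)) = 0" for j
    using partial_periodic[OF P k] partial_eq_0_if_critical_point[OF C(2)] by simp
  have ne: "x1 + k - x0 \<noteq> 0"
  proof
    assume "x1 + k - x0 = 0"
    then have "x0 $ i - x1 $ i = k $ i" for i by (simp add: vec_eq_iff algebra_simps)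
    then show False using distinct k by simp
  qed
  have "norm (x1 + k - x0) = norm (x0 - x1 - k)"
    by (metis minus_diff_eq norm_minus_cancel diff_diff_eq add.commute)
  with norm_ge_of_critical_points[OF H \<rho> FV norm_le_supnorm[OF H FV P \<rho>]
      partial_eq_0_if_critical_point[OF C(1)] crit1 ne inv]
  show "\<rho>^3 / (512 * CARD('n)) / (onorm (\<lambda>v. matrix_inv (hessian V x0) *v v) * (1 + supnorm F \<rho>))
          \<le> norm (x0 - x1 - k)"
    by simp
qed

theorem lemma7p1:
  fixes \<rho> :: real
  assumes "0 < \<rho>" and "\<rho> \<le> 1"
  shows "\<exists>c>0. \<forall>(V :: real^'n \<Rightarrow> real) (F :: complex^'n \<Rightarrow> complex) x0 x1.
           holo_on F (strip \<rho>)
         \<and> (\<forall>x. F (cvec x) = complex_of_real (V x))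
         \<and> periodic1 V
         \<and> critical_point V x0 \<and> critical_point V x1
         \<and> \<not> (\<forall>i. x0 $ i - x1 $ i \<in> \<int>)
         \<and> invertible (hessian V x0)
         \<longrightarrow> torus_dist x0 x1 \<ge>
               c / (onorm (\<lambda>v. matrix_inv (hessian V x0) *v v) * (1 + supnorm F \<rho>))"
proof (intro exI[of _ "\<rho>^3 / (512 * CARD('n))"] conjI allI impI)
  show "0 < \<rho>^3 / (512 * CARD('n))" using assms(1) by simp
  fix V :: "real^'n \<Rightarrow> real" and F :: "complex^'n \<Rightarrow> complex" and x0 x1 :: "real^'n"
  assume "holo_on F (strip \<rho>) \<and> (\<forall>x. F (cvec x) = complex_of_real (V x)) \<and> periodic1 V
    \<and> critical_point V x0 \<and> critical_point V x1 \<and> \<not> (\<forall>i. x0 $ i - x1 $ i \<in> \<int>)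
    \<and> invertible (hessian V x0)"
  then show "\<rho>^3 / (512 * CARD('n)) / (onorm (\<lambda>v. matrix_inv (hessian V x0) *v v) * (1 + supnorm F \<rho>))
               \<le> torus_dist x0 x1"
    using torus_dist_critical_points_ge[OF _ assms(1)] by blast
qed

end
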